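(* Consider a triadic majority rule round among participants $x,y,z$ (nodes of a median graph), started from any state of the round (any current winner and any proposer). Suppose $y$ and $z$ follow truthful bargaining while $x$ follows an arbitrary (possibly history-dependent) strategy. Then either the round never ends, or $m(x,y,z)$ lies on a shortest path between $x$ and the winner $\hat w$ of the round.
   Context: $G$ is a finite connected unweighted undirected median graph: with shortest-path distance $d$ and $I_{ab}=\{v:d(a,v)+d(v,b)=d(a,b)\}$, $\lvert I_{ab}\cap I_{ac}\cap I_{bc}\rvert=1$ for all $a,b,c$, and $m(a,b,c)$ is that node. Triadic majority rule round: there is a current winner and a proposer. In each step the proposer proposes a node or a motion to end; all three vote simultaneously to accept or reject. An accepted alternative becomes the current winner. If the vote is unanimous the proposer stays; otherwise the participant in the minority becomes proposer. If a motion to end is accepted by majority, the round ends with winner the current winner. Truthful bargaining for $u$ with current winner $w$: $P_u=I_{uw}\setminus\{w\}$, $B_u=(P_u\cap P_{u'})\cup(P_u\cap P_{u''})$ ($u',u''$ the other members); $u$ proposes a point of $B_u$ closest to $u$ if $B_u\neq\emptyset$ and a motion to end otherwise; accepts an alternative $a$ iff $d(u,a)<d(u,w)$; accepts a motion to end iff $B_u=\emptyset$; ties broken arbitrarily. *)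

theory Defs
  imports Main
begin

inductive walk :: "('a \<Rightarrow> 'a \<Rightarrow> bool) \<Rightarrow> 'a \<Rightarrow> 'a \<Rightarrow> nat \<Rightarrow> bool" for E where
  walk_refl: "walk E u u 0"
| walk_step: "E u v \<Longrightarrow> walk E v w n \<Longrightarrow> walk E u w (Suc n)"

definition gdist :: "('a \<Rightarrow> 'a \<Rightarrow> bool) \<Rightarrow> 'a \<Rightarrow> 'a \<Rightarrow> nat" where
  "gdist E u v = (LEAST n. walk E u v n)"

definition interval :: "'a set \<Rightarrow> ('a \<Rightarrow> 'a \<Rightarrow> bool) \<Rightarrow> 'a \<Rightarrow> 'a \<Rightarrow> 'a set" where
  "interval V E a b = {v \<in> V. gdist E a v + gdist E v b = gdist E a b}"

definition median_graph :: "'a set \<Rightarrow> ('a \<Rightarrow> 'a \<Rightarrow> bool) \<Rightarrow> bool" where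
  "median_graph V E \<longleftrightarrow>
     finite V \<and> V \<noteq> {} \<and>
     (\<forall>u v. E u v \<longrightarrow> u \<in> V \<and> v \<in> V) \<and>
     (\<forall>u v. E u v \<longrightarrow> E v u) \<and>
     (\<forall>u. \<not> E u u) \<and>
     (\<forall>u\<in>V. \<forall>v\<in>V. \<exists>n. walk E u v n) \<and>
     (\<forall>a\<in>V. \<forall>b\<in>V. \<forall>c\<in>V.
        card (interval V E a b \<inter> interval V E a c \<inter> interval V E b c) = 1)"

definition median :: "'a set \<Rightarrow> ('a \<Rightarrow> 'a \<Rightarrow> bool) \<Rightarrow> 'a \<Rightarrow> 'a \<Rightarrow> 'a \<Rightarrow> 'a" where
  "median V E a b c = (THE m. m \<in> interval V E a b \<inter> interval V E a c \<inter> interval V E b c)"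

datatype agent = AX | AY | AZ

datatype 'a proposal = Node 'a | EndMotion

definition loc :: "'a \<Rightarrow> 'a \<Rightarrow> 'a \<Rightarrow> agent \<Rightarrow> 'a" where
  "loc x y z a = (case a of AX \<Rightarrow> x | AY \<Rightarrow> y | AZ \<Rightarrow> z)"

definition accepted :: "(agent \<Rightarrow> bool) \<Rightarrow> bool" where
  "accepted vt \<longleftrightarrow> (vt AX \<and> vt AY) \<or> (vt AX \<and> vt AZ) \<or> (vt AY \<and> vt AZ)"

definition unanimous :: "(agent \<Rightarrow> bool) \<Rightarrow> bool" where
  "unanimous vt \<longleftrightarrow> vt AX = vt AY \<and> vt AY = vt AZ"

definition minority :: "(agent \<Rightarrow> bool) \<Rightarrow> agent" where
  "minority vt = (THE a. \<forall>b. b \<noteq> a \<longrightarrow> vt b \<noteq> vt a)"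

definition next_proposer :: "agent \<Rightarrow> (agent \<Rightarrow> bool) \<Rightarrow> agent" where
  "next_proposer p vt = (if unanimous vt then p else minority vt)"

definition next_winner :: "'a \<Rightarrow> 'a proposal \<Rightarrow> (agent \<Rightarrow> bool) \<Rightarrow> 'a" where
  "next_winner w q vt = (case q of Node v \<Rightarrow> if accepted vt then v else w | EndMotion \<Rightarrow> w)"

text \<open>Truthful bargaining. pl: positions of the agents, u: the agent, w: current winner.\<close>

definition Pset :: "'a set \<Rightarrow> ('a \<Rightarrow> 'a \<Rightarrow> bool) \<Rightarrow> (agent \<Rightarrow> 'a) \<Rightarrow> agent \<Rightarrow> 'a \<Rightarrow> 'a set" where
  "Pset V E pl u w = interval V E (pl u) w - {w}"

definition Bset :: "'a set \<Rightarrow> ('a \<Rightarrow> 'a \<Rightarrow> bool) \<Rightarrow> (agent \<Rightarrow> 'a) \<Rightarrow> agent \<Rightarrow> 'a \<Rightarrow> 'a set" where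
  "Bset V E pl u w = (\<Union>u'\<in>{a. a \<noteq> u}. Pset V E pl u w \<inter> Pset V E pl u' w)"

definition truthful_proposal ::
  "'a set \<Rightarrow> ('a \<Rightarrow> 'a \<Rightarrow> bool) \<Rightarrow> (agent \<Rightarrow> 'a) \<Rightarrow> agent \<Rightarrow> 'a \<Rightarrow> 'a proposal \<Rightarrow> bool" where
  "truthful_proposal V E pl u w q \<longleftrightarrow>
     (if Bset V E pl u w \<noteq> {}
      then (\<exists>v. q = Node v \<and> v \<in> Bset V E pl u w \<and>
                 (\<forall>v'\<in>Bset V E pl u w. gdist E (pl u) v \<le> gdist E (pl u) v'))
      else q = EndMotion)"

definition truthful_vote ::
  "'a set \<Rightarrow> ('a \<Rightarrow> 'a \<Rightarrow> bool) \<Rightarrow> (agent \<Rightarrow> 'a) \<Rightarrow> agent \<Rightarrow> 'a \<Rightarrow> 'a proposal \<Rightarrow> bool \<Rightarrow> bool" where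
  "truthful_vote V E pl u w q b \<longleftrightarrow>
     (case q of Node a \<Rightarrow> b = (gdist E (pl u) a < gdist E (pl u) w)
              | EndMotion \<Rightarrow> b = (Bset V E pl u w = {}))"

text \<open>An ending play of a round of n+1 steps: at step i the current winner is w i, the proposer
  p i, the proposal q i and the votes vt i.  Agents AY and AZ follow truthful bargaining (with
  arbitrary tie-breaking); agent AX is unconstrained apart from proposing nodes of the graph
  (i.e. it may follow any, possibly history-dependent, strategy).\<close>

definition ending_play ::
  "'a set \<Rightarrow> ('a \<Rightarrow> 'a \<Rightarrow> bool) \<Rightarrow> (agent \<Rightarrow> 'a) \<Rightarrow> (nat \<Rightarrow> 'a) \<Rightarrow> (nat \<Rightarrow> agent)
   \<Rightarrow> (nat \<Rightarrow> 'a proposal) \<Rightarrow> (nat \<Rightarrow> agent \<Rightarrow> bool) \<Rightarrow> nat \<Rightarrow> bool" where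
  "ending_play V E pl w p q vt n \<longleftrightarrow>
     w 0 \<in> V \<and>
     (\<forall>i\<le>n. \<forall>v. q i = Node v \<longrightarrow> v \<in> V) \<and>
     (\<forall>i\<le>n. p i \<noteq> AX \<longrightarrow> truthful_proposal V E pl (p i) (w i) (q i)) \<and>
     (\<forall>i\<le>n. \<forall>u. u \<noteq> AX \<longrightarrow> truthful_vote V E pl u (w i) (q i) (vt i u)) \<and>
     (\<forall>i<n. \<not> (q i = EndMotion \<and> accepted (vt i))) \<and>
     (\<forall>i<n. w (Suc i) = next_winner (w i) (q i) (vt i)) \<and>
     (\<forall>i<n. p (Suc i) = next_proposer (p i) (vt i)) \<and>
     q n = EndMotion \<and> accepted (vt n)"

end

theory Submission
  imports Defs
begin

text \<open>When the round ends, a majority accepted the motion to end, so one of the truthful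
  agents, say \<open>u\<close>, voted for it; hence \<open>B\<^sub>u = {}\<close>, i.e. the punctured interval \<open>I\<^sub>u\<^sub>w - {w}\<close> is
  disjoint from those of both other agents.  In a median graph, disjointness of
  \<open>I\<^sub>a\<^sub>w - {w}\<close> and \<open>I\<^sub>b\<^sub>w - {w}\<close> forces \<open>m(a,b,w) = w\<close>, i.e. \<open>w \<in> I\<^sub>a\<^sub>b\<close>.  So the final winner lies
  on geodesics from \<open>u\<close> to both other agents, and a short distance computation then puts the
  median of the three agents on a geodesic from \<open>x\<close> to the winner.\<close>

lemma walk_append: "walk E u v m \<Longrightarrow> walk E v w k \<Longrightarrow> walk E u w (m + k)"
  by (induction rule: walk.induct) (auto intro: walk.intros)

lemma walk_sym:
  assumes "symp E"
  shows "walk E u v n \<Longrightarrow> walk E v u n"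
proof (induction rule: walk.induct)
  case (walk_refl u)
  show ?case by (rule walk.walk_refl)
next
  case (walk_step u v w n)
  have "walk E v u 1" using sympD[OF assms walk_step(1)] by (auto intro: walk.intros)
  from walk_append[OF walk_step(3) this] show ?case by simp
qed

lemma gdist_sym:
  assumes "symp E"
  shows "gdist E a b = gdist E b a"
proof -
  have "walk E a b = walk E b a" using walk_sym[OF assms] by blast
  then show ?thesis unfolding gdist_def by simp
qed

lemma walk_gdist: "walk E u v n \<Longrightarrow> walk E u v (gdist E u v)"
  unfolding gdist_def by (rule LeastI)

lemma gdist_le: "walk E u v n \<Longrightarrow> gdist E u v \<le> n"
  unfolding gdist_def by (rule Least_le)

lemma gdist_triangle:
  assumes "walk E a b m" and "walk E b c k"
  shows "gdist E a c \<le> gdist E a b + gdist E b c"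
  using walk_append[OF walk_gdist[OF assms(1)] walk_gdist[OF assms(2)]] by (rule gdist_le)

lemma interval_sym:
  assumes "symp E"
  shows "interval V E a b = interval V E b a"
  unfolding interval_def using gdist_sym[OF assms] by (auto simp: add.commute)

context
  fixes V :: "'a set" and E :: "'a \<Rightarrow> 'a \<Rightarrow> bool"
  assumes mg: "median_graph V E"
begin

lemma median_graph_symp: "symp E"
  using mg unfolding median_graph_def symp_def by blast

lemma median_graph_triangle:
  assumes "a \<in> V" "b \<in> V" "c \<in> V"
  shows "gdist E a c \<le> gdist E a b + gdist E b c"
  using mg assms unfolding median_graph_def by (meson gdist_triangle)

lemma ex1_median:
  assumes "a \<in> V" "b \<in> V" "c \<in> V"
  shows "\<exists>!t. t \<in> interval V E a b \<inter> interval V E a c \<inter> interval V E b c"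
proof -
  have "card (interval V E a b \<inter> interval V E a c \<inter> interval V E b c) = 1"
    using mg assms unfolding median_graph_def by blast
  then show ?thesis by (metis card_1_singletonE singleton_iff)
qed

lemma median_in_intervals:
  assumes "a \<in> V" "b \<in> V" "c \<in> V"
  shows "median V E a b c \<in> interval V E a b \<inter> interval V E a c \<inter> interval V E b c"
  unfolding median_def using theI'[OF ex1_median[OF assms]] .

lemma median_eqI:
  assumes "a \<in> V" "b \<in> V" "c \<in> V"
    and "t \<in> interval V E a b \<inter> interval V E a c \<inter> interval V E b c"
  shows "median V E a b c = t"
  using ex1_median[OF assms(1-3)] median_in_intervals[OF assms(1-3)] assms(4) by blast

lemma median_swap23:
  assumes "a \<in> V" "b \<in> V" "c \<in> V"
  shows "median V E a c b = median V E a b c"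
proof -
  have "median V E a c b \<in> interval V E a b \<inter> interval V E a c \<inter> interval V E b c"
    using median_in_intervals[OF assms(1,3,2)]
    unfolding interval_sym[OF median_graph_symp, of V c b] by blast
  then show ?thesis using median_eqI[OF assms] by simp
qed

text \<open>The median of \<open>a\<close>, \<open>b\<close>, \<open>w\<close> lies in both punctured intervals unless it is \<open>w\<close>.\<close>

lemma mem_interval_if_punctured_disjoint:
  assumes "a \<in> V" "b \<in> V" "w \<in> V"
    and "(interval V E a w - {w}) \<inter> (interval V E b w - {w}) = {}"
  shows "w \<in> interval V E a b"
proof -
  have "median V E a b w \<in> interval V E a w" "median V E a b w \<in> interval V E b w"
    using median_in_intervals[OF assms(1-3)] by auto
  then have "median V E a b w = w" using assms(4) by blast
  then show ?thesis using median_in_intervals[OF assms(1-3)] by simp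
qed

lemma median_in_interval_if_between:
  assumes V: "x \<in> V" "c \<in> V" "z \<in> V" "w \<in> V"
    and xc: "w \<in> interval V E x c" and cz: "w \<in> interval V E c z"
  shows "median V E x c z \<in> interval V E x w"
proof -
  txt \<open>\<open>m(w,x,z)\<close> also lies between \<open>x\<close> and \<open>c\<close> and between \<open>c\<close> and \<open>z\<close>, so it is \<open>m(x,c,z)\<close>.\<close>
  define t where "t = median V E w x z"
  have t: "t \<in> interval V E w x" "t \<in> interval V E w z" "t \<in> interval V E x z"
    using median_in_intervals[OF V(4,1,3)] unfolding t_def by auto
  then have tV: "t \<in> V" unfolding interval_def by blast
  note dist_sym = gdist_sym[OF median_graph_symp]
  have "gdist E x t + gdist E t c = gdist E x c"
  proof -
    have "gdist E x c = gdist E x w + gdist E w c" "gdist E w t + gdist E t x = gdist E w x"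
      using xc t(1) unfolding interval_def by auto
    then show ?thesis
      using median_graph_triangle[OF tV V(4,2)] median_graph_triangle[OF V(1) tV V(2)]
        dist_sym[of x t] dist_sym[of x w] dist_sym[of t w] by linarith
  qed
  then have "t \<in> interval V E x c" unfolding interval_def using tV by simp
  moreover have "gdist E c t + gdist E t z = gdist E c z"
  proof -
    have "gdist E c z = gdist E c w + gdist E w z" "gdist E w t + gdist E t z = gdist E w z"
      using cz t(2) unfolding interval_def by auto
    then show ?thesis
      using median_graph_triangle[OF V(2,4) tV] median_graph_triangle[OF V(2) tV V(3)]
        dist_sym[of w t] by linarith
  qed
  then have "t \<in> interval V E c z" unfolding interval_def using tV by simp
  ultimately have "median V E x c z = t"
    using median_eqI[OF V(1-3)] t(3) by blast
  then show ?thesis using t(1) interval_sym[OF median_graph_symp] by simp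
qed

end

lemma ending_play_winner_in_V:
  assumes "ending_play V E pl w p q vt n" and "i \<le> n"
  shows "w i \<in> V"
  using assms(2)
proof (induction i)
  case 0
  then show ?case using assms(1) unfolding ending_play_def by blast
next
  case (Suc i)
  then have "i < n" by simp
  then have "w (Suc i) = next_winner (w i) (q i) (vt i)" "\<forall>v. q i = Node v \<longrightarrow> v \<in> V"
    using assms(1) less_imp_le unfolding ending_play_def by blast+
  with Suc show ?case unfolding next_winner_def by (cases "q i") auto
qed

lemma ending_play_truthful_end_vote:
  assumes "ending_play V E pl w p q vt n" and "u \<noteq> AX"
  shows "vt n u \<longleftrightarrow> Bset V E pl u (w n) = {}"
proof -
  have "\<forall>i\<le>n. \<forall>u. u \<noteq> AX \<longrightarrow> truthful_vote V E pl u (w i) (q i) (vt i u)" and "q n = EndMotion"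
    using assms(1) unfolding ending_play_def by simp_all
  then have "truthful_vote V E pl u (w n) (q n) (vt n u)" using assms(2) by blast
  then show ?thesis using \<open>q n = EndMotion\<close> unfolding truthful_vote_def by simp
qed

lemma mem_interval_if_Bset_empty:
  assumes "median_graph V E" and "\<And>a. pl a \<in> V" and "w \<in> V"
    and "Bset V E pl u w = {}" and "u' \<noteq> u"
  shows "w \<in> interval V E (pl u) (pl u')"
proof (rule mem_interval_if_punctured_disjoint[OF assms(1) assms(2)[of u] assms(2)[of u'] assms(3)])
  have "Pset V E pl u w \<inter> Pset V E pl u' w = {}"
    using assms(4,5) unfolding Bset_def by blast
  then show "(interval V E (pl u) w - {w}) \<inter> (interval V E (pl u') w - {w}) = {}"
    unfolding Pset_def .
qed

theorem lemmaI8: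
  fixes V :: "'a set" and E :: "'a \<Rightarrow> 'a \<Rightarrow> bool" and x y z :: 'a
    and w :: "nat \<Rightarrow> 'a" and p :: "nat \<Rightarrow> agent" and q :: "nat \<Rightarrow> 'a proposal"
    and vt :: "nat \<Rightarrow> agent \<Rightarrow> bool" and n :: nat
  assumes "median_graph V E"
    and "x \<in> V" and "y \<in> V" and "z \<in> V"
    and "ending_play V E (loc x y z) w p q vt n"
  shows "median V E x y z \<in> interval V E x (w n)"
proof -
  have loc_V: "\<And>a. loc x y z a \<in> V"
    using assms(2-4) unfolding loc_def by (simp split: agent.split)
  have wn: "w n \<in> V" using ending_play_winner_in_V[OF assms(5)] by simp
  have between: "w n \<in> interval V E (loc x y z u) (loc x y z u')"
    if "vt n u" "u \<noteq> AX" "u' \<noteq> u" for u u'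
  proof (rule mem_interval_if_Bset_empty[OF assms(1) loc_V wn _ that(3)])
    show "Bset V E (loc x y z) u (w n) = {}"
      using that(1) ending_play_truthful_end_vote[OF assms(5) that(2)] by simp
  qed
  note E_symp = median_graph_symp[OF assms(1)]
  have "accepted (vt n)" using assms(5) unfolding ending_play_def by simp
  then have "vt n AY \<or> vt n AZ" unfolding accepted_def by blast
  then show ?thesis
  proof
    assume "vt n AY"
    then have "w n \<in> interval V E x y" "w n \<in> interval V E y z"
      using between[of AY AX] between[of AY AZ] interval_sym[OF E_symp, of V y x]
      by (simp_all add: loc_def)
    then show ?thesis by (rule median_in_interval_if_between[OF assms(1-4) wn])
  next
    assume "vt n AZ"
    then have "w n \<in> interval V E x z" "w n \<in> interval V E z y"
      using between[of AZ AX] between[of AZ AY] interval_sym[OF E_symp, of V z x]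
      by (simp_all add: loc_def)
    then have "median V E x z y \<in> interval V E x (w n)"
      by (rule median_in_interval_if_between[OF assms(1,2,4,3) wn])
    then show ?thesis using median_swap23[OF assms(1-4)] by simp
  qed
qed

end
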